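(* Let $\mathbf d$ be a graphical degree sequence and let $k$ be an integer with $\underline{\mu}(\mathbf d)\le k\le\overline{\mu}(\mathbf d)$. Then there is a graph $G$ realizing $\mathbf d$ with $\mu(G)=k$.
   Context: All graphs are finite and simple. For a graph $G=(V,E)$ on $n$ vertices, a fractional vertex cover is a function $f:V\to[0,\infty)$ with $f(u)+f(v)\ge 1$ for every edge $uv\in E$; $\tau^*(G)$ denotes the minimum of $\sum_{v\in V}f(v)$ over all fractional vertex covers. For $E'\subseteq E$ let $G-E'=(V,E\setminus E')$. Define $\mu(G)=\min\{|E'| : E'\subseteq E,\ \tau^*(G-E')<n/2\}$. A sequence $(d_1,\dots,d_n)$ is graphical if some simple graph on $\{v_1,\dots,v_n\}$ has $d(v_i)=d_i$ for all $i$ (such a graph realizes it). $\underline{\mu}(\mathbf d)$ and $\overline{\mu}(\mathbf d)$ are the minimum and maximum of $\mu(G)$ over all graphs $G$ realizing $\mathbf d$. *)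

theory Defs
  imports Complex_Main
begin

text \<open>A simple graph on the vertex set {0..<n} (vertex i stands for v_(i+1)),
  given by its set of edges, each a 2-element subset of the vertex set.\<close>
definition simple_graph :: "nat \<Rightarrow> nat set set \<Rightarrow> bool" where
  "simple_graph n E \<longleftrightarrow> (\<forall>e\<in>E. e \<subseteq> {0..<n} \<and> card e = 2)"

definition degree :: "nat set set \<Rightarrow> nat \<Rightarrow> nat" where
  "degree E v = card {e\<in>E. v \<in> e}"

definition realizes :: "nat list \<Rightarrow> nat set set \<Rightarrow> bool" where
  "realizes d E \<longleftrightarrow> simple_graph (length d) E \<and> (\<forall>i<length d. degree E i = d ! i)"

definition graphical :: "nat list \<Rightarrow> bool" where
  "graphical d \<longleftrightarrow> (\<exists>E. realizes d E)"

definition frac_vertex_cover :: "nat \<Rightarrow> nat set set \<Rightarrow> (nat \<Rightarrow> real) \<Rightarrow> bool" where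
  "frac_vertex_cover n E f \<longleftrightarrow>
     (\<forall>v<n. f v \<ge> 0) \<and> (\<forall>u v. {u, v} \<in> E \<longrightarrow> f u + f v \<ge> 1)"

text \<open>Minimum total weight of a fractional vertex cover (the minimum is attained,
  so it coincides with the infimum).\<close>
definition tau_star :: "nat \<Rightarrow> nat set set \<Rightarrow> real" where
  "tau_star n E = Inf {(\<Sum>v<n. f v) | f. frac_vertex_cover n E f}"

definition mu :: "nat \<Rightarrow> nat set set \<Rightarrow> nat" where
  "mu n E = (LEAST m. \<exists>E'. E' \<subseteq> E \<and> card E' = m \<and> tau_star n (E - E') < real n / 2)"

definition mu_lower :: "nat list \<Rightarrow> nat" where
  "mu_lower d = Min {mu (length d) E | E. realizes d E}"

definition mu_upper :: "nat list \<Rightarrow> nat" where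
  "mu_upper d = Max {mu (length d) E | E. realizes d E}"

end

theory Submission
  imports Defs
begin

text \<open>
  Call a pair of disjoint vertex sets S, T with |S| > |T| unbalanced, and say that an edge
  crosses it if it joins a vertex of S to a vertex outside T. Removing all crossing edges
  drops \<tau>* below n/2 (put weight 0 on S, 1 on T and 1/2 elsewhere); conversely, a
  threshold argument on a fractional cover of weight below n/2 produces an unbalanced
  pair all of whose crossing edges were removed. Hence \<mu>(G) is the least number of
  edges crossing an unbalanced pair.

  A 2-switch replaces edges ab, cd by ac, bd; if both new edges cross (S, T), so does
  one of the old ones, so \<mu> grows by at most one along a switch. Any two realizations of
  a degree sequence are joined by a sequence of 2-switches, and walking along such a
  sequence from a realization with minimal \<mu> to one with maximal \<mu> attains every
  value in between.
\<close>

lemma simple_graph_finite: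
  assumes "simple_graph n E"
  shows "finite E"
proof (rule finite_subset)
  show "E \<subseteq> Pow {0..<n}"
    using assms unfolding simple_graph_def by auto
qed simp

lemma simple_graph_no_loop: "simple_graph n E \<Longrightarrow> {v} \<notin> E"
  unfolding simple_graph_def by force

lemma simple_graph_edge_eq:
  assumes "simple_graph n E" "e \<in> E" "v \<in> e"
  obtains w where "e = {v, w}" "w < n"
proof -
  obtain p q where "e = {p, q}"
    using assms unfolding simple_graph_def by (metis card_2_iff)
  with \<open>v \<in> e\<close> obtain w where "e = {v, w}"
    by (metis insert_commute insertE singletonD)
  then show ?thesis
    using assms that unfolding simple_graph_def by auto
qed

lemma finite_realizations: "finite {E. realizes d E}"
proof (rule finite_subset)
  show "{E. realizes d E} \<subseteq> Pow (Pow {0..<length d})"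
    unfolding realizes_def simple_graph_def by auto
qed simp

section \<open>Fractional vertex covers and crossing edges\<close>

definition crossing :: "nat set \<Rightarrow> nat set \<Rightarrow> nat set \<Rightarrow> bool" where
  "crossing S T e \<longleftrightarrow> (\<exists>x y. e = {x, y} \<and> x \<in> S \<and> y \<notin> T)"

definition crossing_edges :: "nat set \<Rightarrow> nat set \<Rightarrow> nat set set \<Rightarrow> nat set set" where
  "crossing_edges S T E = {e \<in> E. crossing S T e}"

definition unbalanced_pair :: "nat \<Rightarrow> nat set \<Rightarrow> nat set \<Rightarrow> bool" where
  "unbalanced_pair n S T \<longleftrightarrow> S \<subseteq> {0..<n} \<and> T \<subseteq> {0..<n} \<and> S \<inter> T = {} \<and> card T < card S"

lemma crossing_doubleton_iff:
  "crossing S T {x, y} \<longleftrightarrow> x \<in> S \<and> y \<notin> T \<or> y \<in> S \<and> x \<notin> T"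
  unfolding crossing_def by (auto simp: doubleton_eq_iff)

lemma tau_star_le:
  assumes "frac_vertex_cover n E f"
  shows "tau_star n E \<le> (\<Sum>v<n. f v)"
  unfolding tau_star_def
proof (rule cInf_lower)
  show "(\<Sum>v<n. f v) \<in> {\<Sum>v<n. f v |f. frac_vertex_cover n E f}"
    using assms by blast
  show "bdd_below {\<Sum>v<n. f v |f. frac_vertex_cover n E f}"
    by (rule bdd_belowI[of _ 0]) (auto simp: frac_vertex_cover_def intro!: sum_nonneg)
qed

lemma tau_star_less_imp_cover:
  assumes "tau_star n E < c"
  obtains f where "frac_vertex_cover n E f" "(\<Sum>v<n. f v) < c"
proof -
  have "frac_vertex_cover n E (\<lambda>_. 1)"
    by (simp add: frac_vertex_cover_def)
  then have "{\<Sum>v<n. f v |f. frac_vertex_cover n E f} \<noteq> {}"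
    by blast
  from cInf_lessD[OF this] assms that show ?thesis
    unfolding tau_star_def by blast
qed

lemma tau_star_remove_crossing_edges_less:
  assumes "unbalanced_pair n S T"
  shows "tau_star n (E - crossing_edges S T E) < real n / 2"
proof -
  have S: "S \<subseteq> {..<n}" and T: "T \<subseteq> {..<n}" and ST: "S \<inter> T = {}" and less: "card T < card S"
    using assms unfolding unbalanced_pair_def by auto
  define f :: "nat \<Rightarrow> real" where "f v = (1 - of_bool (v \<in> S) + of_bool (v \<in> T)) / 2" for v
  have "frac_vertex_cover n (E - crossing_edges S T E) f"
    using ST by (auto simp: frac_vertex_cover_def f_def crossing_edges_def crossing_doubleton_iff)
  then have "tau_star n (E - crossing_edges S T E) \<le> (\<Sum>v<n. f v)"
    by (rule tau_star_le)
  also have "\<dots> = (real n - real (card S) + real (card T)) / 2"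
    using Int_absorb1[OF S] Int_absorb1[OF T]
    by (simp add: f_def sum_divide_distrib[symmetric] sum.distrib sum_subtractf Int_commute)
  also have "\<dots> < real n / 2"
    using less by simp
  finally show ?thesis .
qed

lemma superlevel_card_le_Diff:
  fixes x :: "'a \<Rightarrow> real"
  assumes "finite L" "finite U" "v \<in> L" "u \<in> U" "\<And>w. w \<in> L \<Longrightarrow> x w \<le> x v" "x v \<le> x u"
    and "card {w \<in> L. t \<le> x w} \<le> card {w \<in> U. t \<le> x w}"
  shows "card {w \<in> L - {v}. t \<le> x w} \<le> card {w \<in> U - {u}. t \<le> x w}"
proof (cases "t \<le> x v")
  case True
  have "{w \<in> L - {v}. t \<le> x w} = {w \<in> L. t \<le> x w} - {v}"
    and "{w \<in> U - {u}. t \<le> x w} = {w \<in> U. t \<le> x w} - {u}"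
    by auto
  then show ?thesis
    using assms True by (simp only:) (simp add: card_Diff_singleton)
next
  case False
  then have "{w \<in> L - {v}. t \<le> x w} = {}"
    using assms(5) by force
  then show ?thesis
    by (metis card.empty zero_le)
qed

lemma sum_le_sum_if_superlevel_card_le:
  fixes x :: "'a \<Rightarrow> real"
  assumes "finite L" "finite U" "\<And>u. u \<in> U \<Longrightarrow> 0 \<le> x u"
    and "\<And>t. 0 < t \<Longrightarrow> card {v \<in> L. t \<le> x v} \<le> card {v \<in> U. t \<le> x v}"
  shows "sum x L \<le> sum x U"
  using assms
proof (induction L arbitrary: U rule: finite_ranking_induct[where f = x])
  case empty
  then show ?case
    by (simp add: sum_nonneg)
next
  case (insert v L)
  show ?case
  proof (cases "v \<in> L \<or> x v \<le> 0")
    case True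
    then show ?thesis
    proof
      assume "v \<in> L"
      then show ?thesis
        using insert by (simp add: insert_absorb)
    next
      assume "x v \<le> 0"
      with insert.hyps(2) have "sum x (insert v L) \<le> 0"
        by (force intro: sum_nonpos)
      also have "0 \<le> sum x U"
        using insert.prems(2) by (simp add: sum_nonneg)
      finally show ?thesis .
    qed
  next
    case False
    then have "v \<notin> L" "0 < x v"
      by auto
    then have "0 < card {w \<in> insert v L. x v \<le> x w}"
      using insert.hyps(1) by (auto simp: card_gt_0_iff)
    also have "\<dots> \<le> card {w \<in> U. x v \<le> x w}"
      using \<open>0 < x v\<close> by (rule insert.prems(3))
    \<comment> \<open>pair the maximum v of x on L with some u in U where x is at least as large\<close>
    finally obtain u where u: "u \<in> U" "x v \<le> x u"
      by (metis (no_types, lifting) card.empty empty_Collect_eq less_irrefl)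
    have "sum x L \<le> sum x (U - {u})"
    proof (rule insert.IH)
      show "card {w \<in> L. t \<le> x w} \<le> card {w \<in> U - {u}. t \<le> x w}" if "0 < t" for t
        using superlevel_card_le_Diff[of "insert v L" U v u x t] insert that u \<open>v \<notin> L\<close> by auto
    qed (use insert.prems in auto)
    then show ?thesis
      using insert.hyps(1) insert.prems(1) \<open>v \<notin> L\<close> u by (simp add: sum.remove)
  qed
qed

lemma ex_unbalanced_pair_if_tau_star_less:
  assumes sg: "simple_graph n E" and less: "tau_star n (E - F) < real n / 2"
  obtains S T where "unbalanced_pair n S T" "crossing_edges S T E \<subseteq> F"
proof -
  obtain f where cover: "frac_vertex_cover n (E - F) f" and small: "(\<Sum>v<n. f v) < real n / 2"
    using tau_star_less_imp_cover[OF less] .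
  define L where "L = {v \<in> {0..<n}. f v < 1/2}"
  define U where "U = {v \<in> {0..<n}. 1/2 < f v}"
  define x where "x v = \<bar>f v - 1/2\<bar>" for v
  have "(\<Sum>v<n. 1/2 - f v) = (\<Sum>v \<in> L \<union> U. 1/2 - f v)"
    by (rule sum.mono_neutral_right) (auto simp: L_def U_def)
  also have "\<dots> = sum x L - sum x U"
    by (subst sum.union_disjoint) (auto simp: L_def U_def x_def sum_negf[symmetric] intro!: sum.cong)
  finally have "sum x U < sum x L"
    using small by (simp add: sum_subtractf)
  \<comment> \<open>at some threshold t, more vertices have f \<le> 1/2 - t than f \<ge> 1/2 + t\<close>
  then obtain t where "0 < t" and card_less: "card {v \<in> U. t \<le> x v} < card {v \<in> L. t \<le> x v}"
    using sum_le_sum_if_superlevel_card_le[of L U x] by (force simp: L_def U_def x_def)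
  define S where "S = {v \<in> L. t \<le> x v}"
  define T where "T = {v \<in> U. t \<le> x v}"
  have "crossing_edges S T E \<subseteq> F"
  proof
    fix e assume "e \<in> crossing_edges S T E"
    then obtain p q where e: "e = {p, q}" "e \<in> E" and "p \<in> S" "q \<notin> T"
      unfolding crossing_edges_def crossing_def by blast
    show "e \<in> F"
    proof (rule ccontr)
      assume "e \<notin> F"
      with cover e have "1 \<le> f p + f q"
        unfolding frac_vertex_cover_def by blast
      moreover have "q < n"
        using sg e unfolding simple_graph_def by auto
      moreover have "f p \<le> 1/2 - t"
        using \<open>p \<in> S\<close> unfolding S_def L_def x_def by auto
      ultimately have "q \<in> T"
        using \<open>0 < t\<close> unfolding T_def U_def x_def by auto
      with \<open>q \<notin> T\<close> show False ..
    qed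
  qed
  moreover have "unbalanced_pair n S T"
    using card_less unfolding unbalanced_pair_def S_def T_def L_def U_def by auto
  ultimately show ?thesis
    using that by blast
qed

lemma crossing_edges_subset: "crossing_edges S T E \<subseteq> E"
  by (auto simp: crossing_edges_def)

lemma mu_le_card_crossing_edges:
  assumes "unbalanced_pair n S T"
  shows "mu n E \<le> card (crossing_edges S T E)"
  unfolding mu_def
proof (rule Least_le)
  show "\<exists>F. F \<subseteq> E \<and> card F = card (crossing_edges S T E) \<and> tau_star n (E - F) < real n / 2"
    using crossing_edges_subset tau_star_remove_crossing_edges_less[OF assms]
    by (intro exI[of _ "crossing_edges S T E"]) simp
qed

lemma ex_crossing_edges_card_le_mu:
  assumes "simple_graph n E" "0 < n"
  obtains S T where "unbalanced_pair n S T" "card (crossing_edges S T E) \<le> mu n E"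
proof -
  have "unbalanced_pair n {0..<n} {}"
    using assms(2) by (simp add: unbalanced_pair_def)
  then have "\<exists>F. F \<subseteq> E \<and> card F = card (crossing_edges {0..<n} {} E) \<and> tau_star n (E - F) < real n / 2"
    using crossing_edges_subset tau_star_remove_crossing_edges_less
    by (intro exI[of _ "crossing_edges {0..<n} {} E"]) simp
  then have "\<exists>F. F \<subseteq> E \<and> card F = mu n E \<and> tau_star n (E - F) < real n / 2"
    unfolding mu_def by (rule LeastI)
  then obtain F where F: "F \<subseteq> E" "card F = mu n E" "tau_star n (E - F) < real n / 2"
    by blast
  obtain S T where "unbalanced_pair n S T" "crossing_edges S T E \<subseteq> F"
    using ex_unbalanced_pair_if_tau_star_less[OF assms(1) F(3)] .
  moreover have "finite F"
    using F(1) simple_graph_finite[OF assms(1)] by (rule finite_subset)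
  ultimately show ?thesis
    using that F(2) card_mono by metis
qed

section \<open>Switches\<close>

definition switch :: "nat set set \<Rightarrow> nat set set \<Rightarrow> bool" where
  "switch E E' \<longleftrightarrow> (\<exists>a b c d. distinct [a, b, c, d] \<and> {a, b} \<in> E \<and> {c, d} \<in> E \<and>
     {a, c} \<notin> E \<and> {b, d} \<notin> E \<and> E' = E - {{a, b}, {c, d}} \<union> {{a, c}, {b, d}})"

lemma symp_switch: "symp switch"
proof (rule sympI)
  fix E E' assume "switch E E'"
  then obtain a b c d where abcd: "distinct [a, b, c, d]" "{a, b} \<in> E" "{c, d} \<in> E"
    "{a, c} \<notin> E" "{b, d} \<notin> E" and E': "E' = E - {{a, b}, {c, d}} \<union> {{a, c}, {b, d}}"
    unfolding switch_def by blast
  have "distinct [a, c, b, d]" "{a, c} \<in> E'" "{b, d} \<in> E'" "{a, b} \<notin> E'" "{c, d} \<notin> E'"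
    "E = E' - {{a, c}, {b, d}} \<union> {{a, b}, {c, d}}"
    using abcd unfolding E' by (auto simp: doubleton_eq_iff)
  then show "switch E' E"
    unfolding switch_def by blast
qed

lemma card_filter_doubleton:
  assumes "p \<noteq> q"
  shows "card {e \<in> {p, q}. P e} = of_bool (P p) + of_bool (P q)"
proof -
  have "{e \<in> {p, q}. P e} = (if P p then {p} else {}) \<union> (if P q then {q} else {})"
    by auto
  then show ?thesis
    using assms by simp
qed

lemma card_filter_Diff_Un:
  assumes "finite A" "X \<subseteq> A" "A \<inter> Y = {}" "finite Y"
  shows "card {e \<in> A - X \<union> Y. P e} + card {e \<in> X. P e} = card {e \<in> A. P e} + card {e \<in> Y. P e}"
proof -
  have "{e \<in> A - X \<union> Y. P e} = ({e \<in> A. P e} - {e \<in> X. P e}) \<union> {e \<in> Y. P e}"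
    by auto
  then have "card {e \<in> A - X \<union> Y. P e} = card ({e \<in> A. P e} - {e \<in> X. P e}) + card {e \<in> Y. P e}"
    using assms by (simp add: card_Un_disjoint disjoint_iff)
  moreover have "card ({e \<in> A. P e} - {e \<in> X. P e}) = card {e \<in> A. P e} - card {e \<in> X. P e}"
    using assms(1,2) by (intro card_Diff_subset) (auto intro: finite_subset)
  moreover have "card {e \<in> X. P e} \<le> card {e \<in> A. P e}"
    using assms(1,2) by (intro card_mono) auto
  ultimately show ?thesis
    by simp
qed

lemma card_filter_switched:
  assumes "finite E" "distinct [a, b, c, d]" "{a, b} \<in> E" "{c, d} \<in> E" "{a, c} \<notin> E" "{b, d} \<notin> E"
  shows "card {e \<in> E - {{a, b}, {c, d}} \<union> {{a, c}, {b, d}}. P e} + of_bool (P {a, b}) + of_bool (P {c, d})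
    = card {e \<in> E. P e} + of_bool (P {a, c}) + of_bool (P {b, d})"
proof -
  have ne: "{a, b} \<noteq> {c, d}" "{a, c} \<noteq> {b, d}"
    using assms(2) by (auto simp: doubleton_eq_iff)
  have "card {e \<in> E - {{a, b}, {c, d}} \<union> {{a, c}, {b, d}}. P e} + card {e \<in> {{a, b}, {c, d}}. P e}
      = card {e \<in> E. P e} + card {e \<in> {{a, c}, {b, d}}. P e}"
    using assms by (intro card_filter_Diff_Un) auto
  then show ?thesis
    unfolding card_filter_doubleton[OF ne(1)] card_filter_doubleton[OF ne(2)] by (simp only: add.assoc)
qed

lemma switch_realizes:
  assumes "switch E E'" "realizes d E"
  shows "realizes d E'"
proof -
  have sg: "simple_graph (length d) E"
    using assms(2) unfolding realizes_def by simp
  obtain a b c e where abce: "distinct [a, b, c, e]" "{a, b} \<in> E" "{c, e} \<in> E" "{a, c} \<notin> E" "{b, e} \<notin> E"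
    and E': "E' = E - {{a, b}, {c, e}} \<union> {{a, c}, {b, e}}"
    using assms(1) unfolding switch_def by blast
  have "of_bool (v \<in> {a, b}) + of_bool (v \<in> {c, e}) = (of_bool (v \<in> {a, c}) + of_bool (v \<in> {b, e}) :: nat)"
    for v
    using abce(1) by (simp add: of_bool_def)
  then have "degree E' v = degree E v" for v
    using card_filter_switched[OF simple_graph_finite[OF sg] abce, of "\<lambda>f. v \<in> f"]
    unfolding degree_def E' by (simp add: add.assoc)
  moreover have "simple_graph (length d) E'"
    using sg abce unfolding E' simple_graph_def by auto
  ultimately show ?thesis
    using assms(2) unfolding realizes_def by simp
qed

lemma rtranclp_switch_realizes: "switch\<^sup>*\<^sup>* E E' \<Longrightarrow> realizes d E \<Longrightarrow> realizes d E'"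
  by (induction rule: rtranclp_induct) (auto intro: switch_realizes)

lemma card_crossing_edges_switch_le:
  assumes "switch E E'" "finite E" "S \<inter> T = {}"
  shows "card (crossing_edges S T E') \<le> card (crossing_edges S T E) + 1"
proof -
  obtain a b c d where abcd: "distinct [a, b, c, d]" "{a, b} \<in> E" "{c, d} \<in> E" "{a, c} \<notin> E" "{b, d} \<notin> E"
    and E': "E' = E - {{a, b}, {c, d}} \<union> {{a, c}, {b, d}}"
    using assms(1) unfolding switch_def by blast
  have "card (crossing_edges S T E') + of_bool (crossing S T {a, b}) + of_bool (crossing S T {c, d})
      = card (crossing_edges S T E) + of_bool (crossing S T {a, c}) + of_bool (crossing S T {b, d})"
    unfolding crossing_edges_def E' by (rule card_filter_switched[OF assms(2) abcd])
  moreover have "of_bool (crossing S T {a, c}) + of_bool (crossing S T {b, d})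
      \<le> of_bool (crossing S T {a, b}) + of_bool (crossing S T {c, d}) + (1 :: nat)"
    using assms(3) unfolding crossing_doubleton_iff by auto
  ultimately show ?thesis
    by linarith
qed

lemma mu_switch_le:
  assumes "simple_graph n E" "switch E E'"
  shows "mu n E' \<le> mu n E + 1"
proof -
  obtain a b where "{a, b} \<in> E"
    using assms(2) unfolding switch_def by blast
  then have "0 < n"
    using assms(1) unfolding simple_graph_def by fastforce
  then obtain S T where ST: "unbalanced_pair n S T" "card (crossing_edges S T E) \<le> mu n E"
    using ex_crossing_edges_card_le_mu[OF assms(1)] by blast
  have "mu n E' \<le> card (crossing_edges S T E')"
    using ST(1) by (rule mu_le_card_crossing_edges)
  also have "\<dots> \<le> card (crossing_edges S T E) + 1"
    using assms ST(1) simple_graph_finite unfolding unbalanced_pair_def by (blast intro: card_crossing_edges_switch_le)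
  finally show ?thesis
    using ST(2) by linarith
qed

section \<open>Realizations are connected by switches\<close>

definition neighbours :: "nat set set \<Rightarrow> nat \<Rightarrow> nat set" where
  "neighbours E v = {w. {v, w} \<in> E}"

definition same_edges_at :: "nat set \<Rightarrow> nat set set \<Rightarrow> nat set set \<Rightarrow> bool" where
  "same_edges_at W G H \<longleftrightarrow> (\<forall>e. e \<inter> W \<noteq> {} \<longrightarrow> (e \<in> G \<longleftrightarrow> e \<in> H))"

lemma same_edges_atD: "same_edges_at W G H \<Longrightarrow> e \<inter> W \<noteq> {} \<Longrightarrow> e \<in> G \<longleftrightarrow> e \<in> H"
  unfolding same_edges_at_def by blast

lemma same_edges_at_sym: "same_edges_at W G H \<Longrightarrow> same_edges_at W H G"
  unfolding same_edges_at_def by blast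

lemma finite_neighbours: "simple_graph n E \<Longrightarrow> finite (neighbours E v)"
  unfolding simple_graph_def neighbours_def
  by (rule finite_subset[of _ "{0..<n}"]) auto

lemma degree_eq_card_neighbours:
  assumes "simple_graph n E"
  shows "degree E v = card (neighbours E v)"
proof -
  have "{e \<in> E. v \<in> e} = (\<lambda>w. {v, w}) ` neighbours E v"
    unfolding neighbours_def by (auto elim: simple_graph_edge_eq[OF assms])
  moreover have "inj_on (\<lambda>w. {v, w}) (neighbours E v)"
    by (auto simp: inj_on_def doubleton_eq_iff)
  ultimately show ?thesis
    unfolding degree_def by (simp add: card_image)
qed

lemma card_neighbours_Diff_eq:
  assumes "simple_graph n G" "simple_graph n H" "same_edges_at W G H"
    and "card (neighbours G v) = card (neighbours H v)"
  shows "card (neighbours G v - W) = card (neighbours H v - W)"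
proof -
  have "card (neighbours G v - W) = card (neighbours G v) - card (neighbours G v \<inter> W)"
    and "card (neighbours H v - W) = card (neighbours H v) - card (neighbours H v \<inter> W)"
    using finite_neighbours[OF assms(1)] finite_neighbours[OF assms(2)] by (simp_all add: card_Diff_subset_Int)
  moreover have "neighbours G v \<inter> W = neighbours H v \<inter> W"
  proof (rule set_eqI)
    fix w
    show "w \<in> neighbours G v \<inter> W \<longleftrightarrow> w \<in> neighbours H v \<inter> W"
      using same_edges_atD[OF assms(3), of "{v, w}"] unfolding neighbours_def by auto
  qed
  ultimately show ?thesis
    using assms(4) by simp
qed

lemma ex_switch_partner:
  assumes sg: "simple_graph n G" and "{x, y} \<in> G" "{x, z} \<notin> G"
    and "x \<notin> W" "y \<notin> W" "z \<notin> W" "y \<noteq> z" "x \<noteq> z"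
    and le: "card (neighbours G y - W) \<le> card (neighbours G z - W)"
  obtains w where "w \<notin> W" "{z, w} \<in> G" "{y, w} \<notin> G" "w \<noteq> x" "w \<noteq> y" "w \<noteq> z"
proof (rule ccontr)
  assume no_partner: "\<not> thesis"
  define A where "A = neighbours G z - W"
  define B where "B = neighbours G y - W"
  have "A - {y} \<subseteq> B - {z} - {x}"
  proof
    fix w assume w: "w \<in> A - {y}"
    then have "w \<noteq> z" "w \<noteq> x"
      using simple_graph_no_loop[OF sg] \<open>{x, z} \<notin> G\<close> unfolding A_def neighbours_def
      by (auto simp: insert_commute)
    with w no_partner that have "{y, w} \<in> G"
      unfolding A_def neighbours_def by blast
    with w \<open>w \<noteq> z\<close> \<open>w \<noteq> x\<close> show "w \<in> B - {z} - {x}"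
      unfolding A_def B_def neighbours_def by auto
  qed
  moreover have "x \<in> B - {z}"
    using assms unfolding B_def neighbours_def by (auto simp: insert_commute)
  ultimately have "A - {y} \<subset> B - {z}"
    by blast
  then have "card (A - {y}) < card (B - {z})"
    using finite_neighbours[OF sg] unfolding B_def by (auto intro: psubset_card_mono)
  moreover have "y \<in> A \<longleftrightarrow> z \<in> B"
    unfolding A_def B_def neighbours_def using assms by (auto simp: insert_commute)
  ultimately have "card A < card B"
    using finite_neighbours[OF sg] unfolding A_def B_def by (auto simp: card_Diff_singleton_if split: if_splits)
  with le show False
    unfolding A_def B_def by simp
qed

lemma ex_switch_towards:
  assumes sg: "simple_graph n G" "simple_graph n H" and agree: "same_edges_at W G H" and "x \<notin> W"
    and y: "{x, y} \<in> G" "{x, y} \<notin> H" and z: "{x, z} \<in> H" "{x, z} \<notin> G"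
    and le: "card (neighbours G y - W) \<le> card (neighbours G z - W)"
  obtains G' where "switch G G'" "same_edges_at W G' H"
    "neighbours G' x = insert z (neighbours G x - {y})"
proof -
  have "y \<notin> W" "z \<notin> W"
    using same_edges_atD[OF agree, of "{x, y}"] same_edges_atD[OF agree, of "{x, z}"] y z by auto
  moreover have "y \<noteq> x" "z \<noteq> x" "y \<noteq> z"
    using simple_graph_no_loop[OF sg(1)] simple_graph_no_loop[OF sg(2)] y z by auto
  ultimately obtain w where w: "w \<notin> W" "{z, w} \<in> G" "{y, w} \<notin> G" "w \<noteq> x" "w \<noteq> y" "w \<noteq> z"
    using ex_switch_partner[OF sg(1) y(1) z(2) \<open>x \<notin> W\<close>] le by metis
  define G' where "G' = G - {{x, y}, {z, w}} \<union> {{x, z}, {y, w}}"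
  have "switch G G'"
    unfolding switch_def G'_def
    using \<open>y \<noteq> x\<close> \<open>z \<noteq> x\<close> \<open>y \<noteq> z\<close> w y z by (intro exI[of _ x] exI[of _ y] exI[of _ z] exI[of _ w]) auto
  moreover have "same_edges_at W G' H"
    unfolding same_edges_at_def
  proof (intro allI impI)
    fix e assume "e \<inter> W \<noteq> {}"
    moreover have "{x, y} \<inter> W = {}" "{z, w} \<inter> W = {}" "{x, z} \<inter> W = {}" "{y, w} \<inter> W = {}"
      using \<open>x \<notin> W\<close> \<open>y \<notin> W\<close> \<open>z \<notin> W\<close> w(1) by auto
    ultimately have "e \<in> G' \<longleftrightarrow> e \<in> G"
      unfolding G'_def by auto
    then show "e \<in> G' \<longleftrightarrow> e \<in> H"
      using same_edges_atD[OF agree \<open>e \<inter> W \<noteq> {}\<close>] by simp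
  qed
  moreover have "neighbours G' x = insert z (neighbours G x - {y})"
    unfolding G'_def neighbours_def using w(4) \<open>z \<noteq> x\<close> \<open>y \<noteq> x\<close> by (auto simp: doubleton_eq_iff)
  ultimately show ?thesis
    using that by blast
qed

lemma same_edges_at_insert:
  assumes "simple_graph n G" "simple_graph n H" "same_edges_at W G H"
    and "neighbours G x = neighbours H x"
  shows "same_edges_at (insert x W) G H"
  unfolding same_edges_at_def
proof (intro allI impI)
  fix e assume "e \<inter> insert x W \<noteq> {}"
  then consider "e \<inter> W \<noteq> {}" | "x \<in> e"
    by blast
  then show "e \<in> G \<longleftrightarrow> e \<in> H"
  proof cases
    case 1
    then show ?thesis
      by (rule same_edges_atD[OF assms(3)])
  next
    case 2
    have "{x, w} \<in> G \<longleftrightarrow> {x, w} \<in> H" for w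
      using assms(4) unfolding neighbours_def by blast
    with 2 show ?thesis
      by (metis simple_graph_edge_eq assms(1,2))
  qed
qed

lemma switch_to_same_edges_at_insert:
  assumes "realizes d G" "realizes d H" "same_edges_at W G H" "x \<notin> W" "x < length d"
  shows "\<exists>G' H'. switch\<^sup>*\<^sup>* G G' \<and> switch\<^sup>*\<^sup>* H H' \<and> same_edges_at (insert x W) G' H'"
  using assms(1-3)
proof (induction "card (neighbours G x - neighbours H x)" arbitrary: G H rule: less_induct)
  case less
  have sgG: "simple_graph (length d) G" and sgH: "simple_graph (length d) H"
    using less.prems(1,2) unfolding realizes_def by auto
  have same_card: "card (neighbours G v) = card (neighbours H v)" if "v < length d" for v
    using less.prems(1,2) that unfolding realizes_def
    by (simp add: degree_eq_card_neighbours[OF sgG] degree_eq_card_neighbours[OF sgH, symmetric])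
  show ?case
  proof (cases "neighbours G x = neighbours H x")
    case True
    then show ?thesis
      using same_edges_at_insert[OF sgG sgH less.prems(3)] by blast
  next
    case False
    then have "\<not> neighbours G x \<subseteq> neighbours H x" "\<not> neighbours H x \<subseteq> neighbours G x"
      using card_subset_eq finite_neighbours sgG sgH same_card[OF \<open>x < length d\<close>] by metis+
    then obtain y z where y: "{x, y} \<in> G" "{x, y} \<notin> H" and z: "{x, z} \<in> H" "{x, z} \<notin> G"
      unfolding neighbours_def by blast
    then have "y \<in> neighbours G x - neighbours H x"
      unfolding neighbours_def by simp
    then have dec: "card (neighbours G x - neighbours H x - {y}) < card (neighbours G x - neighbours H x)"
      using finite_neighbours[OF sgG] by (meson card_Diff1_less finite_Diff)
    have yz_le: "y < length d" "z < length d"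
      using sgG sgH y(1) z(1) unfolding simple_graph_def by auto
    show ?thesis
    proof (cases "card (neighbours G y - W) \<le> card (neighbours G z - W)")
      case True
      then obtain G' where G': "switch G G'" "same_edges_at W G' H"
        "neighbours G' x = insert z (neighbours G x - {y})"
        using ex_switch_towards[OF sgG sgH less.prems(3) assms(4) y z] by blast
      then have "neighbours G' x - neighbours H x = neighbours G x - neighbours H x - {y}"
        using z(1) unfolding neighbours_def by auto
      then obtain G'' H'' where "switch\<^sup>*\<^sup>* G' G''" "switch\<^sup>*\<^sup>* H H''" "same_edges_at (insert x W) G'' H''"
        using less.hyps dec switch_realizes[OF G'(1) less.prems(1)] less.prems(2) G'(2) by metis
      then show ?thesis
        using G'(1) by (meson converse_rtranclp_into_rtranclp)
    next
      case False
      then have "card (neighbours H z - W) \<le> card (neighbours H y - W)"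
        using card_neighbours_Diff_eq[OF sgG sgH less.prems(3) same_card] yz_le by simp
      then obtain H' where H': "switch H H'" "same_edges_at W H' G"
        "neighbours H' x = insert y (neighbours H x - {z})"
        using ex_switch_towards[OF sgH sgG same_edges_at_sym[OF less.prems(3)] assms(4) z y] by blast
      then have "neighbours G x - neighbours H' x = neighbours G x - neighbours H x - {y}"
        using z(2) unfolding neighbours_def by auto
      then obtain G'' H'' where "switch\<^sup>*\<^sup>* G G''" "switch\<^sup>*\<^sup>* H' H''" "same_edges_at (insert x W) G'' H''"
        using less.hyps dec switch_realizes[OF H'(1) less.prems(2)] less.prems(1)
          same_edges_at_sym[OF H'(2)] by metis
      then show ?thesis
        using H'(1) by (meson converse_rtranclp_into_rtranclp)
    qed
  qed
qed

lemma switch_connected_if_same_edges_at: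
  assumes "realizes d G" "realizes d H" "same_edges_at W G H"
  shows "switch\<^sup>*\<^sup>* G H"
  using assms
proof (induction "card ({0..<length d} - W)" arbitrary: G H W rule: less_induct)
  case less
  have sgG: "simple_graph (length d) G" and sgH: "simple_graph (length d) H"
    using less.prems(1,2) unfolding realizes_def by auto
  show ?case
  proof (cases "{0..<length d} \<subseteq> W")
    case True
    have "e \<inter> W \<noteq> {}" if "e \<in> G \<or> e \<in> H" for e
    proof -
      have "e \<subseteq> {0..<length d}" "card e = 2"
        using that sgG sgH unfolding simple_graph_def by auto
      then have "e \<subseteq> W" "e \<noteq> {}"
        using True by auto
      then show ?thesis
        by (simp add: Int_absorb2)
    qed
    then have "G = H"
      using same_edges_atD[OF less.prems(3)] by blast
    then show ?thesis
      by simp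
  next
    case False
    then obtain x where x: "x \<notin> W" "x < length d"
      by (auto simp: subset_eq)
    then obtain G' H' where GH': "switch\<^sup>*\<^sup>* G G'" "switch\<^sup>*\<^sup>* H H'" "same_edges_at (insert x W) G' H'"
      using switch_to_same_edges_at_insert[OF less.prems] by blast
    have "{0..<length d} - insert x W = {0..<length d} - W - {x}"
      by auto
    moreover have "x \<in> {0..<length d} - W"
      using x by simp
    ultimately have "card ({0..<length d} - insert x W) < card ({0..<length d} - W)"
      by (metis card_Diff1_less finite_Diff finite_atLeastLessThan)
    then have "switch\<^sup>*\<^sup>* G' H'"
      using less.hyps rtranclp_switch_realizes[OF GH'(1) less.prems(1)]
        rtranclp_switch_realizes[OF GH'(2) less.prems(2)] GH'(3) by blast
    moreover have "switch\<^sup>*\<^sup>* H' H"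
      using GH'(2) symp_switch by (metis sympD symp_rtranclp)
    ultimately show ?thesis
      using GH'(1) by (meson rtranclp_trans)
  qed
qed

lemma realizations_switch_connected:
  "realizes d G \<Longrightarrow> realizes d H \<Longrightarrow> switch\<^sup>*\<^sup>* G H"
  by (rule switch_connected_if_same_edges_at) (auto simp: same_edges_at_def)

section \<open>Intermediate values of \<mu>\<close>

lemma rtranclp_intermediate_value:
  fixes f :: "'a \<Rightarrow> nat"
  assumes "R\<^sup>*\<^sup>* a b" "P a" "f a \<le> k" "k \<le> f b"
    and R_step: "\<And>x y. R x y \<Longrightarrow> P x \<Longrightarrow> P y \<and> f y \<le> f x + 1"
  shows "\<exists>c. P c \<and> f c = k"
proof -
  have "P b \<and> (k \<le> f b \<longrightarrow> (\<exists>c. P c \<and> f c = k))"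
    using assms(1)
  proof (induction rule: rtranclp_induct)
    case base
    then show ?case
      using assms(2,3) by auto
  next
    case (step y z)
    then have "P z" "f z \<le> f y + 1"
      using R_step by auto
    moreover have "\<exists>c. P c \<and> f c = k" if "k \<le> f z"
    proof (cases "k \<le> f y")
      case True
      then show ?thesis
        using step.IH by blast
    next
      case False
      then have "f z = k"
        using that \<open>f z \<le> f y + 1\<close> by linarith
      then show ?thesis
        using \<open>P z\<close> by blast
    qed
    ultimately show ?case
      by blast
  qed
  then show ?thesis
    using assms(4) by blast
qed

lemma finite_mu_values: "finite {mu (length d) E | E. realizes d E}"
  using finite_realizations by (simp add: Setcompr_eq_image)

lemma mu_lower_attained:
  assumes "graphical d"
  obtains E where "realizes d E" "mu (length d) E = mu_lower d"
proof -
  have "{mu (length d) E | E. realizes d E} \<noteq> {}"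
    using assms unfolding graphical_def by blast
  with finite_mu_values have "mu_lower d \<in> {mu (length d) E | E. realizes d E}"
    unfolding mu_lower_def by (rule Min_in)
  with that show ?thesis
    by auto
qed

lemma mu_upper_attained:
  assumes "graphical d"
  obtains E where "realizes d E" "mu (length d) E = mu_upper d"
proof -
  have "{mu (length d) E | E. realizes d E} \<noteq> {}"
    using assms unfolding graphical_def by blast
  with finite_mu_values have "mu_upper d \<in> {mu (length d) E | E. realizes d E}"
    unfolding mu_upper_def by (rule Max_in)
  with that show ?thesis
    by auto
qed

theorem theorem13:
  fixes d :: "nat list" and k :: int
  assumes "graphical d"
    and "int (mu_lower d) \<le> k" and "k \<le> int (mu_upper d)"
  shows "\<exists>E. realizes d E \<and> int (mu (length d) E) = k"
proof -
  obtain E1 where E1: "realizes d E1" "mu (length d) E1 = mu_lower d"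
    using mu_lower_attained[OF assms(1)] .
  obtain E2 where E2: "realizes d E2" "mu (length d) E2 = mu_upper d"
    using mu_upper_attained[OF assms(1)] .
  have "\<exists>E. realizes d E \<and> mu (length d) E = nat k"
  proof (rule rtranclp_intermediate_value[where R = switch])
    show "switch\<^sup>*\<^sup>* E1 E2"
      using E1(1) E2(1) by (rule realizations_switch_connected)
    show "realizes d E' \<and> mu (length d) E' \<le> mu (length d) E + 1"
      if "switch E E'" "realizes d E" for E E'
      using that switch_realizes mu_switch_le unfolding realizes_def by blast
  qed (use E1 E2 assms(2,3) in auto)
  then show ?thesis
    using assms(2) by auto
qed

end
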